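(* Every free monoid is sofic.
   Context: For a non-empty finite set $X$, $\mathrm{Map}(X)$ is the monoid of all maps $X\to X$ under composition (identity $\mathrm{Id}_X$) with the Hamming metric $d_X(f,g)=|\{x\in X : f(x)\ne g(x)\}|/|X|$. For a monoid $M$ with identity $1_M$, finite $K\subset M$ and $\varepsilon,\alpha>0$, a map $\varphi\colon M\to\mathrm{Map}(X)$ is a $(K,\varepsilon)$-morphism if $d_X(\varphi(k_1k_2),\varphi(k_1)\varphi(k_2))\le\varepsilon$ for all $k_1,k_2\in K$ and $d_X(\varphi(1_M),\mathrm{Id}_X)\le\varepsilon$; it is $(K,\alpha)$-injective if $d_X(\varphi(k_1),\varphi(k_2))\ge\alpha$ for all distinct $k_1,k_2\in K$. $M$ is sofic if for every finite $K\subset M$ and every $\varepsilon>0$ there exist a non-empty finite set $X$ and a $(K,1-\varepsilon)$-injective $(K,\varepsilon)$-morphism $\varphi\colon M\to\mathrm{Map}(X)$. *)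

theory Defs
  imports Complex_Main
begin

definition hamming :: "'x set \<Rightarrow> ('x \<Rightarrow> 'x) \<Rightarrow> ('x \<Rightarrow> 'x) \<Rightarrow> real" where
  "hamming X f g = real (card {x\<in>X. f x \<noteq> g x}) / real (card X)"

text \<open>Finite sets X are taken as finite nonempty subsets of nat (every finite set is in
  bijection with one). A map X \<rightarrow> X is a function nat \<Rightarrow> nat mapping X into X,
  compared only on X.\<close>
definition sofic :: "'m set \<Rightarrow> ('m \<Rightarrow> 'm \<Rightarrow> 'm) \<Rightarrow> 'm \<Rightarrow> bool" where
  "sofic M mult one \<longleftrightarrow>
    (\<forall>K (\<epsilon>::real). finite K \<and> K \<subseteq> M \<and> \<epsilon> > 0 \<longrightarrow>
      (\<exists>(X::nat set) (\<phi>::'m \<Rightarrow> nat \<Rightarrow> nat).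
         finite X \<and> X \<noteq> {} \<and>
         (\<forall>m\<in>M. \<phi> m ` X \<subseteq> X) \<and>
         (\<forall>k1\<in>K. \<forall>k2\<in>K. hamming X (\<phi> (mult k1 k2)) (\<phi> k1 \<circ> \<phi> k2) \<le> \<epsilon>) \<and>
         hamming X (\<phi> one) id \<le> \<epsilon> \<and>
         (\<forall>k1\<in>K. \<forall>k2\<in>K. k1 \<noteq> k2 \<longrightarrow> hamming X (\<phi> k1) (\<phi> k2) \<ge> 1 - \<epsilon>)))"

definition free_monoid :: "'a set \<Rightarrow> 'a list set" where
  "free_monoid A = {xs. set xs \<subseteq> A}"

end

theory Submission
  imports Defs
begin

text \<open>A free monoid acts on the finite set of pairs (c, x), with c a counter modulo N + 1 and
  x a word of length at most N over a finite alphabet B: a word w advances the counter by its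
  length and pushes its B-letters in front of x, keeping only the first N letters.
  This is an honest action, and any two distinct words of length at most N over B act
  differently at every point: words of different lengths move the counter differently, and
  words of equal length leave themselves as distinct prefixes of the window. Such an exact
  action yields the sofic approximations with Hamming defect 0 and separation 1.\<close>

lemma hamming_eq_0I:
  assumes "\<And>x. x \<in> X \<Longrightarrow> f x = g x"
  shows "hamming X f g = 0"
proof -
  have "{x\<in>X. f x \<noteq> g x} = {}" using assms by auto
  then have "card {x\<in>X. f x \<noteq> g x} = 0" by (simp only: card.empty)
  then show ?thesis unfolding hamming_def by simp
qed

lemma hamming_eq_1I:
  assumes "finite X" "X \<noteq> {}" "\<And>x. x \<in> X \<Longrightarrow> f x \<noteq> g x"
  shows "hamming X f g = 1"
proof -
  have "{x\<in>X. f x \<noteq> g x} = X" using assms(3) by auto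
  then show ?thesis using assms(1,2) unfolding hamming_def by simp
qed

definition exact_separating_action ::
    "'m set \<Rightarrow> ('m \<Rightarrow> 'm \<Rightarrow> 'm) \<Rightarrow> 'm \<Rightarrow> 'm set \<Rightarrow> 's set \<Rightarrow> ('m \<Rightarrow> 's \<Rightarrow> 's) \<Rightarrow> bool" where
  "exact_separating_action M mult one K S \<psi> \<longleftrightarrow>
     K \<subseteq> M \<and> finite S \<and> S \<noteq> {} \<and>
     (\<forall>m\<in>M. \<psi> m ` S \<subseteq> S) \<and>
     (\<forall>k1\<in>K. \<forall>k2\<in>K. \<forall>s\<in>S. \<psi> (mult k1 k2) s = \<psi> k1 (\<psi> k2 s)) \<and>
     (\<forall>s\<in>S. \<psi> one s = s) \<and>
     (\<forall>k1\<in>K. \<forall>k2\<in>K. k1 \<noteq> k2 \<longrightarrow> (\<forall>s\<in>S. \<psi> k1 s \<noteq> \<psi> k2 s))"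

lemma exact_separating_action_bij_betw:
  assumes act: "exact_separating_action M mult one K S \<psi>"
    and h: "bij_betw h T S"
  shows "exact_separating_action M mult one K T (\<lambda>m t. inv_into T h (\<psi> m (h t)))"
proof -
  note act_def = act[unfolded exact_separating_action_def]
  have hT: "h t \<in> S" if "t \<in> T" for t using h that bij_betwE by blast
  have invT: "inv_into T h s \<in> T" if "s \<in> S" for s
    using h that bij_betw_imp_surj_on inv_into_into by metis
  have h_inv: "h (inv_into T h s) = s" if "s \<in> S" for s
    using h that bij_betw_imp_surj_on f_inv_into_f by metis
  have inv_h: "inv_into T h (h t) = t" if "t \<in> T" for t
    using h that bij_betw_imp_inj_on inv_into_f_f by metis
  have \<psi>S: "\<psi> m s \<in> S" if "m \<in> M" "s \<in> S" for m s
    using act_def that by blast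
  have KM: "K \<subseteq> M" using act_def by blast
  have "finite T" "T \<noteq> {}"
    using act_def h by (auto simp: bij_betw_finite dest: bij_betw_imp_surj_on)
  moreover have "inv_into T h (\<psi> m (h t)) \<in> T" if "m \<in> M" "t \<in> T" for m t
    using that hT \<psi>S invT by blast
  moreover have "inv_into T h (\<psi> (mult k1 k2) (h t))
      = inv_into T h (\<psi> k1 (h (inv_into T h (\<psi> k2 (h t)))))"
    if "k1 \<in> K" "k2 \<in> K" "t \<in> T" for k1 k2 t
  proof -
    have "\<psi> k2 (h t) \<in> S" using that KM hT \<psi>S by blast
    then show ?thesis using act_def that hT h_inv by simp
  qed
  moreover have "inv_into T h (\<psi> one (h t)) = t" if "t \<in> T" for t
    using act_def that hT inv_h by simp
  moreover have "inv_into T h (\<psi> k1 (h t)) \<noteq> inv_into T h (\<psi> k2 (h t))"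
    if "k1 \<in> K" "k2 \<in> K" "k1 \<noteq> k2" "t \<in> T" for k1 k2 t
  proof -
    have "\<psi> k1 (h t) \<in> S" "\<psi> k2 (h t) \<in> S" using that KM hT \<psi>S by blast+
    moreover have "\<psi> k1 (h t) \<noteq> \<psi> k2 (h t)" using act_def that hT by blast
    ultimately show ?thesis using h_inv by metis
  qed
  ultimately show ?thesis
    using KM unfolding exact_separating_action_def by (simp add: image_subset_iff)
qed

lemma exact_separating_action_on_nat:
  assumes "exact_separating_action M mult one K S \<psi>"
  obtains X :: "nat set" and \<phi> where "exact_separating_action M mult one K X \<phi>"
proof -
  have "finite S" using assms unfolding exact_separating_action_def by blast
  then obtain h where "bij_betw h {0..<card S} S" using ex_bij_betw_nat_finite by blast
  then show ?thesis using exact_separating_action_bij_betw[OF assms] that by blast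
qed

lemma sofic_if_exact_separating_actions:
  fixes M :: "'m set"
  assumes "\<And>K. finite K \<Longrightarrow> K \<subseteq> M \<Longrightarrow>
    \<exists>(S :: 's set) \<psi>. exact_separating_action M mult one K S \<psi>"
  shows "sofic M mult one"
  unfolding sofic_def
proof (intro allI impI)
  fix K and \<epsilon> :: real
  assume K: "finite K \<and> K \<subseteq> M \<and> \<epsilon> > 0"
  then obtain X :: "nat set" and \<phi> where act: "exact_separating_action M mult one K X \<phi>"
    using assms exact_separating_action_on_nat by metis
  then have X: "finite X" "X \<noteq> {}" unfolding exact_separating_action_def by blast+
  have "hamming X (\<phi> (mult k1 k2)) (\<phi> k1 \<circ> \<phi> k2) = 0" if "k1 \<in> K" "k2 \<in> K" for k1 k2
    using act that by (intro hamming_eq_0I) (simp add: exact_separating_action_def)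
  moreover have "hamming X (\<phi> one) id = 0"
    using act by (intro hamming_eq_0I) (simp add: exact_separating_action_def)
  moreover have "hamming X (\<phi> k1) (\<phi> k2) = 1" if "k1 \<in> K" "k2 \<in> K" "k1 \<noteq> k2" for k1 k2
    using act that X by (intro hamming_eq_1I) (auto simp: exact_separating_action_def)
  ultimately show "\<exists>(X::nat set) \<phi>. finite X \<and> X \<noteq> {} \<and> (\<forall>m\<in>M. \<phi> m ` X \<subseteq> X) \<and>
      (\<forall>k1\<in>K. \<forall>k2\<in>K. hamming X (\<phi> (mult k1 k2)) (\<phi> k1 \<circ> \<phi> k2) \<le> \<epsilon>) \<and>
      hamming X (\<phi> one) id \<le> \<epsilon> \<and>
      (\<forall>k1\<in>K. \<forall>k2\<in>K. k1 \<noteq> k2 \<longrightarrow> 1 - \<epsilon> \<le> hamming X (\<phi> k1) (\<phi> k2))"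
    using act K X unfolding exact_separating_action_def by (intro exI[of _ X] exI[of _ \<phi>]) auto
qed

lemma take_append_take: "take n (xs @ take n ys) = take n (xs @ ys)"
  by (simp add: min_def)

definition window_states :: "'a set \<Rightarrow> nat \<Rightarrow> (nat \<times> 'a list) set" where
  "window_states B N = {(c, x). c \<le> N \<and> length x \<le> N \<and> set x \<subseteq> B}"

definition window_action :: "'a set \<Rightarrow> nat \<Rightarrow> 'a list \<Rightarrow> nat \<times> 'a list \<Rightarrow> nat \<times> 'a list" where
  "window_action B N w = (\<lambda>(c, x). ((c + length w) mod Suc N, take N (filter (\<lambda>a. a \<in> B) w @ x)))"

lemma finite_window_states: "finite B \<Longrightarrow> finite (window_states B N)"
proof -
  assume "finite B"
  then have "finite ({..N} \<times> {x. set x \<subseteq> B \<and> length x \<le> N})"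
    by (simp add: finite_lists_length_le)
  moreover have "window_states B N \<subseteq> {..N} \<times> {x. set x \<subseteq> B \<and> length x \<le> N}"
    unfolding window_states_def by auto
  ultimately show ?thesis by (rule finite_subset[rotated])
qed

lemma window_action_closed: "window_action B N w ` window_states B N \<subseteq> window_states B N"
  unfolding window_states_def window_action_def by (force dest: in_set_takeD)

lemma window_action_append:
  "window_action B N (v @ w) s = window_action B N v (window_action B N w s)"
proof -
  obtain c x where s: "s = (c, x)" by fastforce
  have "(c + length (v @ w)) mod Suc N = ((c + length w) mod Suc N + length v) mod Suc N"
    by (simp add: mod_add_right_eq ac_simps)
  then show ?thesis unfolding window_action_def s by (simp del: take_append add: take_append_take)
qed

lemma window_action_Nil: "s \<in> window_states B N \<Longrightarrow> window_action B N [] s = s"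
  unfolding window_action_def window_states_def by auto

lemma window_action_separates:
  assumes "set v \<subseteq> B" "set w \<subseteq> B" "length v \<le> N" "length w \<le> N" "v \<noteq> w"
  shows "window_action B N v s \<noteq> window_action B N w s"
proof -
  obtain c x where s: "s = (c, x)" by fastforce
  have filter_B: "filter (\<lambda>a. a \<in> B) v = v" "filter (\<lambda>a. a \<in> B) w = w"
    using assms(1,2) by (auto simp: filter_id_conv)
  show ?thesis
  proof (cases "length v = length w")
    case True
    have "take (length v) (take N (v @ x)) = v" "take (length v) (take N (w @ x)) = w"
      using assms(3) True by (simp_all add: min_def)
    then have "take N (v @ x) \<noteq> take N (w @ x)" using assms(5) by metis
    then show ?thesis unfolding window_action_def s filter_B by auto
  next
    case False
    have "(c + length v) mod Suc N \<noteq> (c + length w) mod Suc N"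
    proof
      assume "(c + length v) mod Suc N = (c + length w) mod Suc N"
      then have "length v mod Suc N = length w mod Suc N" by (simp add: nat_mod_eq_iff)
      then show False using assms(3,4) False by simp
    qed
    then show ?thesis unfolding window_action_def s by auto
  qed
qed

lemma exact_separating_action_window:
  fixes K :: "'a list set"
  assumes "finite K" "K \<subseteq> M"
  defines "B \<equiv> \<Union>(set ` K)" and "N \<equiv> Max (insert 0 (length ` K))"
  shows "exact_separating_action M (@) [] K (window_states B N) (window_action B N)"
proof -
  have "finite B" using assms(1) unfolding B_def by blast
  then have "finite (window_states B N)" by (rule finite_window_states)
  moreover have "(0, []) \<in> window_states B N" unfolding window_states_def by simp
  moreover have "\<forall>m\<in>M. window_action B N m ` window_states B N \<subseteq> window_states B N"
    using window_action_closed by blast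
  moreover have "\<forall>k1\<in>K. \<forall>k2\<in>K. \<forall>s\<in>window_states B N.
      window_action B N (k1 @ k2) s = window_action B N k1 (window_action B N k2 s)"
    by (simp add: window_action_append)
  moreover have "\<forall>s\<in>window_states B N. window_action B N [] s = s"
    by (simp add: window_action_Nil)
  moreover have "\<forall>k1\<in>K. \<forall>k2\<in>K. k1 \<noteq> k2 \<longrightarrow>
      (\<forall>s\<in>window_states B N. window_action B N k1 s \<noteq> window_action B N k2 s)"
  proof (intro ballI impI)
    fix k1 k2 s assume "k1 \<in> K" "k2 \<in> K" "k1 \<noteq> k2"
    with assms(1) show "window_action B N k1 s \<noteq> window_action B N k2 s"
      by (intro window_action_separates) (auto simp: B_def N_def)
  qed
  ultimately show ?thesis using assms(2) unfolding exact_separating_action_def by blast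
qed

theorem corollary4p4:
  fixes A :: "'a set"
  shows "sofic (free_monoid A) (@) []"
proof (rule sofic_if_exact_separating_actions)
  fix K :: "'a list set"
  assume "finite K" "K \<subseteq> free_monoid A"
  then show "\<exists>(S :: (nat \<times> 'a list) set) \<psi>.
      exact_separating_action (free_monoid A) (@) [] K S \<psi>"
    by (blast intro: exact_separating_action_window)
qed

end
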